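(* Let $G$ be a connected graph in $\mathcal{C}$ and $C$ an induced $C_5$ in $G$. If $R\neq\emptyset$, then $G$ has at most 22 vertices or $G$ has a clique cutset.
   Context: $\mathcal{C}=\mathrm{Free}(\text{claw}, 4K_1, \text{5-wheel}, C_5\text{-twin}, P_5\text{-twin}, K_5-e)$, where $\mathrm{Free}(L)$ is the class of graphs with no induced subgraph isomorphic to a member of $L$; the claw is $K_{1,3}$; $4K_1$ is the edgeless graph on 4 vertices; the 5-wheel is $C_5$ plus a vertex adjacent to all five cycle vertices; the $C_5$-twin is $C_5$ plus a new vertex adjacent to one cycle vertex $v$ and both cycle-neighbours of $v$; the $P_5$-twin is a path $p_1p_2p_3p_4p_5$ plus a new vertex adjacent to exactly $p_2,p_3,p_4$; $K_5-e$ is $K_5$ minus one edge. Given an induced cycle $C$ of length 5, $R$ is the set of vertices outside $C$ with no neighbour in $C$. A clique cutset of $G$ is a set $S$ of vertices inducing a clique such that $G-S$ is disconnected. *)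

theory Defs
  imports Main
begin

definition graph :: "'a set \<Rightarrow> ('a \<Rightarrow> 'a \<Rightarrow> bool) \<Rightarrow> bool" where
  "graph V E \<longleftrightarrow> finite V \<and> (\<forall>u v. E u v \<longrightarrow> u \<in> V \<and> v \<in> V)
     \<and> (\<forall>u v. E u v \<longrightarrow> E v u) \<and> (\<forall>u. \<not> E u u)"

definition has_induced :: "'a set \<Rightarrow> ('a \<Rightarrow> 'a \<Rightarrow> bool) \<Rightarrow> 'b set \<Rightarrow> ('b \<Rightarrow> 'b \<Rightarrow> bool) \<Rightarrow> bool" where
  "has_induced V E HV HE \<longleftrightarrow> (\<exists>f. inj_on f HV \<and> f ` HV \<subseteq> V \<and>
      (\<forall>x\<in>HV. \<forall>y\<in>HV. E (f x) (f y) \<longleftrightarrow> HE x y))"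

definition edges_of :: "(nat \<times> nat) list \<Rightarrow> nat \<Rightarrow> nat \<Rightarrow> bool" where
  "edges_of L x y \<longleftrightarrow> (x, y) \<in> set L \<or> (y, x) \<in> set L"

definition claw_E :: "nat \<Rightarrow> nat \<Rightarrow> bool" where
  "claw_E = edges_of [(0,1),(0,2),(0,3)]"

definition fourK1_E :: "nat \<Rightarrow> nat \<Rightarrow> bool" where
  "fourK1_E = edges_of []"

definition C5_E :: "nat \<Rightarrow> nat \<Rightarrow> bool" where
  "C5_E = edges_of [(0,1),(1,2),(2,3),(3,4),(4,0)]"

definition wheel5_E :: "nat \<Rightarrow> nat \<Rightarrow> bool" where
  "wheel5_E = edges_of [(0,1),(1,2),(2,3),(3,4),(4,0),(5,0),(5,1),(5,2),(5,3),(5,4)]"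

definition C5_twin_E :: "nat \<Rightarrow> nat \<Rightarrow> bool" where
  "C5_twin_E = edges_of [(0,1),(1,2),(2,3),(3,4),(4,0),(5,0),(5,1),(5,4)]"

definition P5_twin_E :: "nat \<Rightarrow> nat \<Rightarrow> bool" where
  "P5_twin_E = edges_of [(0,1),(1,2),(2,3),(3,4),(5,1),(5,2),(5,3)]"

definition K5_minus_e_E :: "nat \<Rightarrow> nat \<Rightarrow> bool" where
  "K5_minus_e_E = edges_of [(0,2),(0,3),(0,4),(1,2),(1,3),(1,4),(2,3),(2,4),(3,4)]"

definition in_class_C :: "'a set \<Rightarrow> ('a \<Rightarrow> 'a \<Rightarrow> bool) \<Rightarrow> bool" where
  "in_class_C V E \<longleftrightarrow>
     \<not> has_induced V E {0..<4} claw_E \<and>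
     \<not> has_induced V E {0..<4} fourK1_E \<and>
     \<not> has_induced V E {0..<6} wheel5_E \<and>
     \<not> has_induced V E {0..<6} C5_twin_E \<and>
     \<not> has_induced V E {0..<6} P5_twin_E \<and>
     \<not> has_induced V E {0..<5} K5_minus_e_E"

definition induced_on :: "'a set \<Rightarrow> ('a \<Rightarrow> 'a \<Rightarrow> bool) \<Rightarrow> 'a \<Rightarrow> 'a \<Rightarrow> bool" where
  "induced_on S E u v \<longleftrightarrow> u \<in> S \<and> v \<in> S \<and> E u v"

definition connected_graph :: "'a set \<Rightarrow> ('a \<Rightarrow> 'a \<Rightarrow> bool) \<Rightarrow> bool" where
  "connected_graph V E \<longleftrightarrow> V \<noteq> {} \<and> (\<forall>u\<in>V. \<forall>v\<in>V. (induced_on V E)\<^sup>*\<^sup>* u v)"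

definition is_clique :: "('a \<Rightarrow> 'a \<Rightarrow> bool) \<Rightarrow> 'a set \<Rightarrow> bool" where
  "is_clique E S \<longleftrightarrow> (\<forall>x\<in>S. \<forall>y\<in>S. x \<noteq> y \<longrightarrow> E x y)"

definition clique_cutset :: "'a set \<Rightarrow> ('a \<Rightarrow> 'a \<Rightarrow> bool) \<Rightarrow> 'a set \<Rightarrow> bool" where
  "clique_cutset V E S \<longleftrightarrow> S \<subseteq> V \<and> is_clique E S \<and>
     (\<exists>u\<in>V - S. \<exists>v\<in>V - S. \<not> (induced_on (V - S) E)\<^sup>*\<^sup>* u v)"

definition induced_C5 :: "'a set \<Rightarrow> ('a \<Rightarrow> 'a \<Rightarrow> bool) \<Rightarrow> (nat \<Rightarrow> 'a) \<Rightarrow> bool" where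
  "induced_C5 V E c \<longleftrightarrow> inj_on c {0..<5} \<and> c ` {0..<5} \<subseteq> V \<and>
     (\<forall>i<5. \<forall>j<5. E (c i) (c j) \<longleftrightarrow> C5_E i j)"

definition R_set :: "'a set \<Rightarrow> ('a \<Rightarrow> 'a \<Rightarrow> bool) \<Rightarrow> (nat \<Rightarrow> 'a) \<Rightarrow> 'a set" where
  "R_set V E c = {v \<in> V - c ` {0..<5}. \<forall>i<5. \<not> E v (c i)}"

end

theory Submission
  imports Defs
begin

text \<open>Every vertex outside the induced cycle \<open>C\<close> sees nothing of \<open>C\<close> (the set \<open>R\<close>), exactly one
edge of \<open>C\<close>, or all of \<open>C\<close> but one vertex: a claw forbids a neighbour on \<open>C\<close> without a
neighbouring neighbour, a \<open>C\<^sub>5\<close>-twin forbids exactly three consecutive neighbours and a 5-wheel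
all five. Vertices of the second kind are complete to \<open>R\<close> (no \<open>4K\<^sub>1\<close>), vertices of the third kind
anticomplete to it (no claw), so \<open>N(R)\<close> consists of vertices complete to \<open>R\<close>, and \<open>R\<close> itself is
a clique. If \<open>N(R)\<close> is a clique it is a cutset separating \<open>R\<close> from \<open>C\<close>. Otherwise two non-adjacent
vertices of \<open>N(R)\<close> and three vertices of \<open>R\<close> would induce \<open>K\<^sub>5 - e\<close>, so \<open>|R| \<le> 2\<close>; as there are
at most two vertices seeing a given edge and at most one missing a given vertex (claw and
\<open>K\<^sub>5 - e\<close> again), \<open>|V| \<le> 5 + 2 + 5\<cdot>2 + 5\<cdot>1 = 22\<close>.\<close>

lemma has_induced_list:
  assumes "distinct xs" "set xs \<subseteq> V"
    and "\<forall>i < length xs. \<forall>j < length xs. E (xs ! i) (xs ! j) = HE i j"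
  shows "has_induced V E {0..<length xs} HE"
  unfolding has_induced_def
proof (intro exI conjI)
  show "inj_on (nth xs) {0..<length xs}"
    using assms(1) by (simp add: inj_on_def nth_eq_iff_index_eq)
  show "nth xs ` {0..<length xs} \<subseteq> V"
    using assms(2) by auto
qed (use assms(3) in simp)

lemma card_le_2I:
  assumes "finite S"
    and "\<And>x y z. x \<in> S \<Longrightarrow> y \<in> S \<Longrightarrow> z \<in> S \<Longrightarrow> x \<noteq> y \<Longrightarrow> x \<noteq> z \<Longrightarrow> y \<noteq> z \<Longrightarrow> False"
  shows "card S \<le> 2"
proof (rule ccontr)
  assume "\<not> card S \<le> 2"
  then have "3 \<le> card S" by simp
  then obtain T where "T \<subseteq> S" "card T = 3"
    by (rule obtain_subset_with_card_n)
  then obtain x y z where "x \<in> S" "y \<in> S" "z \<in> S" "x \<noteq> y" "x \<noteq> z" "y \<noteq> z"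
    unfolding card_3_iff by blast
  then show False
    by (rule assms(2))
qed

lemma card_le_1I:
  assumes "finite S" and "\<And>x y. x \<in> S \<Longrightarrow> y \<in> S \<Longrightarrow> x \<noteq> y \<Longrightarrow> False"
  shows "card S \<le> 1"
  using card_le_Suc0_iff_eq[OF assms(1)] assms(2) by auto

lemma rtranclp_induced_on_closed:
  assumes "(induced_on W E)\<^sup>*\<^sup>* x y" "x \<in> X"
    and "\<And>u w. u \<in> X \<Longrightarrow> w \<in> W \<Longrightarrow> E u w \<Longrightarrow> w \<in> X"
  shows "y \<in> X"
  using assms(1,2) by induction (auto simp: induced_on_def intro: assms(3))

lemma clique_cutset_separating:
  assumes "is_clique E N" "N \<subseteq> V" "x \<in> X" "y \<in> V - N - X" "X \<subseteq> V - N"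
    and "\<And>u w. u \<in> X \<Longrightarrow> w \<in> V - N \<Longrightarrow> E u w \<Longrightarrow> w \<in> X"
  shows "clique_cutset V E N"
  unfolding clique_cutset_def
  using assms rtranclp_induced_on_closed[of "V - N" E x y X] by blast

locale classC_graph =
  fixes V :: "'a set" and E :: "'a \<Rightarrow> 'a \<Rightarrow> bool"
  assumes graph: "graph V E" and in_C: "in_class_C V E"
begin

lemma adj_commute: "E x y = E y x"
  using graph unfolding graph_def by blast

lemma not_adj_self [simp]: "\<not> E x x"
  using graph unfolding graph_def by blast

lemma finite_V: "finite V"
  using graph unfolding graph_def by blast

lemma no_claw:
  assumes "a \<in> V" "b \<in> V" "c \<in> V" "d \<in> V" "E a b" "E a c" "E a d"
    and "\<not> E b c" "\<not> E b d" "\<not> E c d" "b \<noteq> c" "b \<noteq> d" "c \<noteq> d"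
  shows False
proof -
  have "has_induced V E {0..<length [a, b, c, d]} claw_E"
    by (rule has_induced_list)
      (use assms in \<open>auto simp: claw_E_def edges_of_def All_less_Suc adj_commute\<close>)
  with in_C show False by (simp add: in_class_C_def eval_nat_numeral)
qed

lemma no_4K1:
  assumes "a \<in> V" "b \<in> V" "c \<in> V" "d \<in> V" "distinct [a, b, c, d]"
    and "\<not> E a b" "\<not> E a c" "\<not> E a d" "\<not> E b c" "\<not> E b d" "\<not> E c d"
  shows False
proof -
  have "has_induced V E {0..<length [a, b, c, d]} fourK1_E"
    by (rule has_induced_list)
      (use assms in \<open>auto simp: fourK1_E_def edges_of_def All_less_Suc adj_commute\<close>)
  with in_C show False by (simp add: in_class_C_def eval_nat_numeral)
qed

lemma no_K5_minus_e:
  assumes "a \<in> V" "b \<in> V" "c \<in> V" "d \<in> V" "e \<in> V" "a \<noteq> b" "\<not> E a b"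
    and "E a c" "E a d" "E a e" "E b c" "E b d" "E b e" "E c d" "E c e" "E d e"
  shows False
proof -
  have "has_induced V E {0..<length [a, b, c, d, e]} K5_minus_e_E"
    by (rule has_induced_list)
      (use assms in \<open>auto simp: K5_minus_e_E_def edges_of_def All_less_Suc adj_commute\<close>)
  with in_C show False by (simp add: in_class_C_def eval_nat_numeral)
qed

definition induced_cycle5 :: "'a \<Rightarrow> 'a \<Rightarrow> 'a \<Rightarrow> 'a \<Rightarrow> 'a \<Rightarrow> bool" where
  "induced_cycle5 a0 a1 a2 a3 a4 \<longleftrightarrow> {a0, a1, a2, a3, a4} \<subseteq> V \<and> distinct [a0, a1, a2, a3, a4] \<and>
     E a0 a1 \<and> E a1 a2 \<and> E a2 a3 \<and> E a3 a4 \<and> E a4 a0 \<and>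
     \<not> E a0 a2 \<and> \<not> E a0 a3 \<and> \<not> E a1 a3 \<and> \<not> E a1 a4 \<and> \<not> E a2 a4"

lemma induced_cycle5_rotate:
  "induced_cycle5 a0 a1 a2 a3 a4 \<Longrightarrow> induced_cycle5 a1 a2 a3 a4 a0"
  unfolding induced_cycle5_def by (auto simp: adj_commute)

lemma induced_cycle5_rotations:
  assumes "induced_cycle5 a0 a1 a2 a3 a4"
  shows "induced_cycle5 a1 a2 a3 a4 a0" "induced_cycle5 a2 a3 a4 a0 a1"
    "induced_cycle5 a3 a4 a0 a1 a2" "induced_cycle5 a4 a0 a1 a2 a3"
  using assms by (meson induced_cycle5_rotate)+

lemma no_5wheel:
  assumes "induced_cycle5 a0 a1 a2 a3 a4" "h \<in> V"
    and "E h a0" "E h a1" "E h a2" "E h a3" "E h a4"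
  shows False
proof -
  have "has_induced V E {0..<length [a0, a1, a2, a3, a4, h]} wheel5_E"
    by (rule has_induced_list)
      (use assms in \<open>auto simp: induced_cycle5_def wheel5_E_def edges_of_def All_less_Suc adj_commute\<close>)
  with in_C show False by (simp add: in_class_C_def eval_nat_numeral)
qed

lemma no_C5_twin:
  assumes "induced_cycle5 a0 a1 a2 a3 a4" "h \<in> V - {a0, a1, a2, a3, a4}"
    and "E h a4" "E h a0" "E h a1" "\<not> E h a2" "\<not> E h a3"
  shows False
proof -
  have "has_induced V E {0..<length [a0, a1, a2, a3, a4, h]} C5_twin_E"
    by (rule has_induced_list)
      (use assms in \<open>auto simp: induced_cycle5_def C5_twin_E_def edges_of_def All_less_Suc adj_commute\<close>)
  with in_C show False by (simp add: in_class_C_def eval_nat_numeral)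
qed

definition sees_edge :: "'a \<Rightarrow> 'a \<Rightarrow> 'a \<Rightarrow> 'a \<Rightarrow> 'a \<Rightarrow> 'a \<Rightarrow> bool" where
  "sees_edge a0 a1 a2 a3 a4 v \<longleftrightarrow> E v a0 \<and> E v a1 \<and> \<not> E v a2 \<and> \<not> E v a3 \<and> \<not> E v a4"

definition sees_all_but :: "'a \<Rightarrow> 'a \<Rightarrow> 'a \<Rightarrow> 'a \<Rightarrow> 'a \<Rightarrow> 'a \<Rightarrow> bool" where
  "sees_all_but a0 a1 a2 a3 a4 v \<longleftrightarrow> \<not> E v a0 \<and> E v a1 \<and> E v a2 \<and> E v a3 \<and> E v a4"

definition remote :: "'a set \<Rightarrow> 'a set" where
  "remote C = {v \<in> V - C. \<forall>x\<in>C. \<not> E v x}"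

definition boundary :: "'a set \<Rightarrow> 'a set" where
  "boundary C = {v \<in> V - C - remote C. \<exists>r\<in>remote C. E v r}"

lemma cycle_nbr_extends:
  assumes "induced_cycle5 a0 a1 a2 a3 a4" and "v \<in> V - {a0, a1, a2, a3, a4}" "E v a0"
  shows "E v a4 \<or> E v a1"
proof (rule ccontr)
  assume "\<not> (E v a4 \<or> E v a1)"
  with assms show False
    using no_claw[of a0 a4 a1 v] unfolding induced_cycle5_def by (auto simp: adj_commute)
qed

lemma cycle_trace_cases:
  assumes cyc: "induced_cycle5 a0 a1 a2 a3 a4" and v: "v \<in> V - {a0, a1, a2, a3, a4}"
  shows "(\<forall>x\<in>{a0, a1, a2, a3, a4}. \<not> E v x) \<or>
    sees_edge a0 a1 a2 a3 a4 v \<or> sees_edge a1 a2 a3 a4 a0 v \<or> sees_edge a2 a3 a4 a0 a1 v \<or>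
    sees_edge a3 a4 a0 a1 a2 v \<or> sees_edge a4 a0 a1 a2 a3 v \<or>
    sees_all_but a0 a1 a2 a3 a4 v \<or> sees_all_but a1 a2 a3 a4 a0 v \<or> sees_all_but a2 a3 a4 a0 a1 v \<or>
    sees_all_but a3 a4 a0 a1 a2 v \<or> sees_all_but a4 a0 a1 a2 a3 v"
proof -
  note cyc1 = induced_cycle5_rotations(1)[OF cyc] and cyc2 = induced_cycle5_rotations(2)[OF cyc]
    and cyc3 = induced_cycle5_rotations(3)[OF cyc] and cyc4 = induced_cycle5_rotations(4)[OF cyc]
  have v': "v \<in> V - {a1, a2, a3, a4, a0}" "v \<in> V - {a2, a3, a4, a0, a1}"
    "v \<in> V - {a3, a4, a0, a1, a2}" "v \<in> V - {a4, a0, a1, a2, a3}"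
    using v by auto
  note runs = cycle_nbr_extends[OF cyc v] cycle_nbr_extends[OF cyc1 v'(1)]
    cycle_nbr_extends[OF cyc2 v'(2)] cycle_nbr_extends[OF cyc3 v'(3)] cycle_nbr_extends[OF cyc4 v'(4)]
  note no_twins = no_C5_twin[OF cyc v] no_C5_twin[OF cyc1 v'(1)]
    no_C5_twin[OF cyc2 v'(2)] no_C5_twin[OF cyc3 v'(3)] no_C5_twin[OF cyc4 v'(4)]
  note no_wheel = no_5wheel[OF cyc, of v]
  show ?thesis
    using runs no_twins no_wheel v unfolding sees_edge_def sees_all_but_def
    by (cases "E v a0"; cases "E v a1"; cases "E v a2"; cases "E v a3"; cases "E v a4"; simp)
qed

lemma sees_edge_adj_remote:
  assumes "induced_cycle5 a0 a1 a2 a3 a4" and "v \<in> V" "sees_edge a0 a1 a2 a3 a4 v"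
    and "r \<in> remote {a0, a1, a2, a3, a4}"
  shows "E v r"
proof (rule ccontr)
  assume "\<not> E v r"
  with assms show False
    using no_4K1[of v r a2 a4]
    unfolding induced_cycle5_def sees_edge_def remote_def by (auto simp: adj_commute)
qed

lemma sees_all_but_not_adj_remote:
  assumes "induced_cycle5 a0 a1 a2 a3 a4" and "v \<in> V" "sees_all_but a0 a1 a2 a3 a4 v"
    and "r \<in> remote {a0, a1, a2, a3, a4}"
  shows "\<not> E v r"
proof
  assume "E v r"
  with assms show False
    using no_claw[of v r a1 a4]
    unfolding induced_cycle5_def sees_all_but_def remote_def by (auto simp: adj_commute)
qed

lemma remote_clique:
  assumes cyc: "induced_cycle5 a0 a1 a2 a3 a4"
  shows "is_clique E (remote {a0, a1, a2, a3, a4})"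
  unfolding is_clique_def
proof (intro ballI impI)
  fix x y assume xy: "x \<in> remote {a0, a1, a2, a3, a4}" "y \<in> remote {a0, a1, a2, a3, a4}" "x \<noteq> y"
  show "E x y"
  proof (rule ccontr)
    assume "\<not> E x y"
    with cyc xy show False
      using no_4K1[of x y a0 a2]
      unfolding induced_cycle5_def remote_def by (auto simp: adj_commute)
  qed
qed

lemma card_sees_edge_le_2:
  assumes cyc: "induced_cycle5 a0 a1 a2 a3 a4" and r: "r \<in> remote {a0, a1, a2, a3, a4}"
  shows "card {v \<in> V - {a0, a1, a2, a3, a4}. sees_edge a0 a1 a2 a3 a4 v} \<le> 2"
    (is "card ?P \<le> 2")
proof (rule card_le_2I)
  show "finite ?P" using finite_V by simp
  have adj: "E x y" if "x \<in> ?P" "y \<in> ?P" "x \<noteq> y" for x y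
  proof (rule ccontr)
    assume "\<not> E x y"
    with cyc that show False
      using no_claw[of a0 a4 x y]
      unfolding induced_cycle5_def sees_edge_def by (auto simp: adj_commute)
  qed
  have adj_r: "E x r" if "x \<in> ?P" for x
    using sees_edge_adj_remote[OF cyc _ _ r] that by blast
  fix x y z assume xyz: "x \<in> ?P" "y \<in> ?P" "z \<in> ?P" "x \<noteq> y" "x \<noteq> z" "y \<noteq> z"
  then show False
    using no_K5_minus_e[of a0 r x y z] cyc r adj[of x y] adj[of x z] adj[of y z]
      adj_r[of x] adj_r[of y] adj_r[of z]
    unfolding induced_cycle5_def sees_edge_def remote_def by (auto simp: adj_commute)
qed

lemma card_sees_all_but_le_1:
  assumes cyc: "induced_cycle5 a0 a1 a2 a3 a4"
  shows "card {v \<in> V - {a0, a1, a2, a3, a4}. sees_all_but a0 a1 a2 a3 a4 v} \<le> 1"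
    (is "card ?Q \<le> 1")
proof (rule card_le_1I)
  show "finite ?Q" using finite_V by simp
  fix x y assume xy: "x \<in> ?Q" "y \<in> ?Q" "x \<noteq> y"
  have "E x y"
  proof (rule ccontr)
    assume "\<not> E x y"
    with cyc xy show False
      using no_claw[of a1 a0 x y]
      unfolding induced_cycle5_def sees_all_but_def by (auto simp: adj_commute)
  qed
  with cyc xy show False
    using no_K5_minus_e[of a2 a4 x y a3]
    unfolding induced_cycle5_def sees_all_but_def by (auto simp: adj_commute)
qed

lemma boundary_adj_remote:
  assumes cyc: "induced_cycle5 a0 a1 a2 a3 a4"
    and v: "v \<in> boundary {a0, a1, a2, a3, a4}" and r: "r \<in> remote {a0, a1, a2, a3, a4}"
  shows "E v r"
proof -
  let ?C = "{a0, a1, a2, a3, a4}"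
  obtain r0 where r0: "r0 \<in> remote ?C" "E v r0" and v': "v \<in> V - ?C" "v \<notin> remote ?C"
    using v unfolding boundary_def by blast
  have rotated: "E v r"
    if "induced_cycle5 b0 b1 b2 b3 b4" "{b0, b1, b2, b3, b4} = ?C"
      and "sees_edge b0 b1 b2 b3 b4 v \<or> sees_all_but b0 b1 b2 b3 b4 v" for b0 b1 b2 b3 b4
    using that sees_edge_adj_remote[OF that(1)] sees_all_but_not_adj_remote[OF that(1)] r r0 v'
    by auto
  have "\<not> (\<forall>x\<in>?C. \<not> E v x)"
    using v' unfolding remote_def by blast
  then show ?thesis
    using cycle_trace_cases[OF cyc v'(1)] rotated[OF cyc]
      rotated[OF induced_cycle5_rotations(1)[OF cyc]] rotated[OF induced_cycle5_rotations(2)[OF cyc]]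
      rotated[OF induced_cycle5_rotations(3)[OF cyc]] rotated[OF induced_cycle5_rotations(4)[OF cyc]]
    by (auto simp: insert_commute)
qed

lemma boundary_clique_cutset:
  assumes cyc: "induced_cycle5 a0 a1 a2 a3 a4"
    and clique: "is_clique E (boundary {a0, a1, a2, a3, a4})" and r: "r \<in> remote {a0, a1, a2, a3, a4}"
  shows "clique_cutset V E (boundary {a0, a1, a2, a3, a4})"
proof (rule clique_cutset_separating[OF clique _ r])
  let ?C = "{a0, a1, a2, a3, a4}"
  show "boundary ?C \<subseteq> V" "remote ?C \<subseteq> V - boundary ?C"
    unfolding boundary_def remote_def by auto
  show "a0 \<in> V - boundary ?C - remote ?C"
    using cyc unfolding induced_cycle5_def boundary_def remote_def by auto
  show "w \<in> remote ?C" if "u \<in> remote ?C" "w \<in> V - boundary ?C" "E u w" for u w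
  proof -
    have "w \<notin> ?C" using that(1,3) unfolding remote_def by auto
    with that show ?thesis unfolding boundary_def by (auto simp: adj_commute)
  qed
qed

lemma card_remote_le_2:
  assumes cyc: "induced_cycle5 a0 a1 a2 a3 a4"
    and not_clique: "\<not> is_clique E (boundary {a0, a1, a2, a3, a4})"
  shows "card (remote {a0, a1, a2, a3, a4}) \<le> 2"
proof (rule card_le_2I)
  let ?C = "{a0, a1, a2, a3, a4}"
  show "finite (remote ?C)" using finite_V unfolding remote_def by simp
  obtain p q where pq: "p \<in> boundary ?C" "q \<in> boundary ?C" "p \<noteq> q" "\<not> E p q"
    using not_clique unfolding is_clique_def by blast
  have "p \<in> V" "q \<in> V" using pq unfolding boundary_def by auto
  fix x y z assume xyz: "x \<in> remote ?C" "y \<in> remote ?C" "z \<in> remote ?C" "x \<noteq> y" "x \<noteq> z" "y \<noteq> z"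
  then have "x \<in> V" "y \<in> V" "z \<in> V" unfolding remote_def by auto
  with xyz pq \<open>p \<in> V\<close> \<open>q \<in> V\<close> show False
    using no_K5_minus_e[of p q x y z] boundary_adj_remote[OF cyc] remote_clique[OF cyc]
    unfolding is_clique_def by meson
qed

lemma card_Un_le_add: "card X \<le> a \<Longrightarrow> card Y \<le> b \<Longrightarrow> card (X \<union> Y) \<le> a + b"
  using card_Un_le[of X Y] by linarith

lemma card_V_le_22:
  assumes cyc: "induced_cycle5 a0 a1 a2 a3 a4"
    and r: "r \<in> remote {a0, a1, a2, a3, a4}" and R: "card (remote {a0, a1, a2, a3, a4}) \<le> 2"
  shows "card V \<le> 22"
proof -
  let ?C = "{a0, a1, a2, a3, a4}"
  have rot: "{a1, a2, a3, a4, a0} = ?C" "{a2, a3, a4, a0, a1} = ?C"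
    "{a3, a4, a0, a1, a2} = ?C" "{a4, a0, a1, a2, a3} = ?C" by auto
  note cyc' = induced_cycle5_rotations[OF cyc]
  let ?P = "\<lambda>b0 b1 b2 b3 b4. {v \<in> V - ?C. sees_edge b0 b1 b2 b3 b4 v}"
  let ?Q = "\<lambda>b0 b1 b2 b3 b4. {v \<in> V - ?C. sees_all_but b0 b1 b2 b3 b4 v}"
  define U where "U = ?C \<union> remote ?C \<union>
    (?P a0 a1 a2 a3 a4 \<union> ?P a1 a2 a3 a4 a0 \<union> ?P a2 a3 a4 a0 a1 \<union> ?P a3 a4 a0 a1 a2 \<union> ?P a4 a0 a1 a2 a3) \<union>
    (?Q a0 a1 a2 a3 a4 \<union> ?Q a1 a2 a3 a4 a0 \<union> ?Q a2 a3 a4 a0 a1 \<union> ?Q a3 a4 a0 a1 a2 \<union> ?Q a4 a0 a1 a2 a3)"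
  have "V \<subseteq> U"
  proof
    fix v assume v: "v \<in> V"
    show "v \<in> U"
    proof (cases "v \<in> ?C")
      case False
      with v have "v \<in> V - ?C" by blast
      from cycle_trace_cases[OF cyc this] this show ?thesis
        unfolding U_def remote_def by (elim disjE) simp_all
    qed (unfold U_def, blast)
  qed
  have "finite U"
    using finite_V cyc unfolding U_def remote_def induced_cycle5_def by simp
  have "card V \<le> card U"
    by (rule card_mono) fact+
  also have "\<dots> \<le> 5 + 2 + (2 + 2 + 2 + 2 + 2) + (1 + 1 + 1 + 1 + 1)"
    unfolding U_def
    by (intro card_Un_le_add R
        card_sees_edge_le_2[OF cyc r] card_sees_all_but_le_1[OF cyc]
        card_sees_edge_le_2[OF cyc'(1), unfolded rot(1), OF r]
        card_sees_edge_le_2[OF cyc'(2), unfolded rot(2), OF r]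
        card_sees_edge_le_2[OF cyc'(3), unfolded rot(3), OF r]
        card_sees_edge_le_2[OF cyc'(4), unfolded rot(4), OF r]
        card_sees_all_but_le_1[OF cyc'(1), unfolded rot(1)]
        card_sees_all_but_le_1[OF cyc'(2), unfolded rot(2)]
        card_sees_all_but_le_1[OF cyc'(3), unfolded rot(3)]
        card_sees_all_but_le_1[OF cyc'(4), unfolded rot(4)])
      (use card_length[of "[a0, a1, a2, a3, a4]"] in simp)
  finally show ?thesis by simp
qed

lemma induced_C5_cycle:
  assumes "induced_C5 V E c"
  shows "induced_cycle5 (c 0) (c 1) (c 2) (c 3) (c 4)"
    and "R_set V E c = remote {c 0, c 1, c 2, c 3, c 4}"
proof -
  have five: "{0..<5::nat} = set [0, 1, 2, 3, 4]" by auto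
  have img: "c ` {0..<5} = {c 0, c 1, c 2, c 3, c 4}"
    unfolding five by simp
  have "distinct (map c [0, 1, 2, 3, 4])"
    using assms unfolding induced_C5_def five distinct_map by simp
  moreover have e: "E (c i) (c j) = C5_E i j" if "i < 5" "j < 5" for i j
    using assms that unfolding induced_C5_def by blast
  ultimately show "induced_cycle5 (c 0) (c 1) (c 2) (c 3) (c 4)"
    using assms img e[of 0 1] e[of 1 2] e[of 2 3] e[of 3 4] e[of 4 0]
      e[of 0 2] e[of 0 3] e[of 1 3] e[of 1 4] e[of 2 4]
    unfolding induced_C5_def induced_cycle5_def by (simp add: C5_E_def edges_of_def)
  show "R_set V E c = remote {c 0, c 1, c 2, c 3, c 4}"
    unfolding R_set_def remote_def img by (simp add: All_less_Suc numeral_eq_Suc conj_ac)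
qed

end

theorem claim17:
  fixes V :: "'a set" and E :: "'a \<Rightarrow> 'a \<Rightarrow> bool" and c :: "nat \<Rightarrow> 'a"
  assumes "graph V E"
    and "connected_graph V E"
    and "in_class_C V E"
    and "induced_C5 V E c"
    and "R_set V E c \<noteq> {}"
  shows "card V \<le> 22 \<or> (\<exists>S. clique_cutset V E S)"
proof -
  interpret classC_graph V E using assms(1,3) by unfold_locales
  let ?C = "{c 0, c 1, c 2, c 3, c 4}"
  note cyc = induced_C5_cycle(1)[OF assms(4)]
  obtain r where r: "r \<in> remote ?C"
    using assms(5) induced_C5_cycle(2)[OF assms(4)] by auto
  show ?thesis
  proof (cases "is_clique E (boundary ?C)")
    case True
    then show ?thesis using boundary_clique_cutset[OF cyc True r] by blast
  next
    case False
    then show ?thesis using card_V_le_22[OF cyc r card_remote_le_2[OF cyc False]] by blast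
  qed
qed

end
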